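(* Let $C=\{c_1,\dots,c_m\}\subset\mathbb{R}$ with $c_1\le c_2\le\dots\le c_m$, let $\mathcal{I}$ be a finite set of closed intervals in $\mathbb{R}$, and let $f\ge0$ be an integer such that every interval $I\in\mathcal{I}$ satisfies $|I\cap C|>f$. Then $T\subseteq C$ is an $f$-tolerant hitting set of $\mathcal{I}$ if and only if $|T\cap C_{i,j}|\ge\delta_{i,j}(f)$ for all $1\le i\le j\le m$.
   Context: A set $X\subseteq C$ hits $\mathcal{I}$ (is a hitting set) if every interval of $\mathcal{I}$ contains a point of $X$. $T\subseteq C$ is an $f$-tolerant hitting set of $\mathcal{I}$ if for every $J\subseteq C$ with $|J|\le f$ there exists $R\subseteq C\setminus J$ with $|(T\setminus J)\cup R|\le|T|$ such that $(T\setminus J)\cup R$ hits $\mathcal{I}$. For a set of points $X$, a set of intervals is $X$-disjoint if every point of $X$ lies in at most one of its intervals. For $1\le i\le j\le m$: $C_{i,j}=\{c_i,\dots,c_j\}$; $\mathcal{I}_{i,j}=\{I\in\mathcal{I}: I\cap C\subseteq C_{i,j}\}$; for $J\subseteq C_{i,j}$, $\delta_{i,j}(J)$ is the maximum size of a $(C_{i,j}\setminus J)$-disjoint subset of $\mathcal{I}_{i,j}$; and $\delta_{i,j}(f)=\max_{J\subseteq C_{i,j},|J|\le f}\delta_{i,j}(J)$. (In the application, $\mathcal{I}$ consists of the intervals of length $2r$ centered at the voters.) *)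

theory Defs
  imports Complex_Main
begin

definition hits :: "real set \<Rightarrow> real set set \<Rightarrow> bool" where
  "hits X Is \<longleftrightarrow> (\<forall>I\<in>Is. X \<inter> I \<noteq> {})"

definition tolerant_hitting_set :: "nat \<Rightarrow> real set \<Rightarrow> real set set \<Rightarrow> real set \<Rightarrow> bool" where
  "tolerant_hitting_set f C Is T \<longleftrightarrow> T \<subseteq> C \<and>
     (\<forall>J. J \<subseteq> C \<and> card J \<le> f \<longrightarrow>
        (\<exists>R. R \<subseteq> C - J \<and> card ((T - J) \<union> R) \<le> card T \<and> hits ((T - J) \<union> R) Is))"

definition X_disjoint :: "real set \<Rightarrow> real set set \<Rightarrow> bool" where
  "X_disjoint X S \<longleftrightarrow> (\<forall>x\<in>X. card {I\<in>S. x \<in> I} \<le> 1)"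

definition Cij :: "(nat \<Rightarrow> real) \<Rightarrow> nat \<Rightarrow> nat \<Rightarrow> real set" where
  "Cij c i j = c ` {i..j}"

definition Iij :: "real set \<Rightarrow> (nat \<Rightarrow> real) \<Rightarrow> real set set \<Rightarrow> nat \<Rightarrow> nat \<Rightarrow> real set set" where
  "Iij C c Is i j = {I\<in>Is. I \<inter> C \<subseteq> Cij c i j}"

definition delta_set :: "real set \<Rightarrow> (nat \<Rightarrow> real) \<Rightarrow> real set set \<Rightarrow> nat \<Rightarrow> nat \<Rightarrow> real set \<Rightarrow> nat" where
  "delta_set C c Is i j J =
     Max (card ` {S. S \<subseteq> Iij C c Is i j \<and> X_disjoint (Cij c i j - J) S})"

definition delta_f :: "real set \<Rightarrow> (nat \<Rightarrow> real) \<Rightarrow> real set set \<Rightarrow> nat \<Rightarrow> nat \<Rightarrow> nat \<Rightarrow> nat" where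
  "delta_f C c Is i j f =
     Max {delta_set C c Is i j J | J. J \<subseteq> Cij c i j \<and> card J \<le> f}"

end

theory Submission
  imports Defs
begin

text \<open>
  Necessity: after deleting J \<subseteq> C_{i,j}, the repaired hitting set X = (T - J) \<union> R meets
  the intervals of a (C_{i,j} - J)-disjoint subfamily of I_{i,j} at distinct points of
  X \<inter> C_{i,j}; as X has at most |T| points and contains T outside C_{i,j}, this gives
  |X \<inter> C_{i,j}| \<le> |T \<inter> C_{i,j}|.

  Sufficiency: given J, the greedy rule "pierce the interval with the leftmost right end
  at its rightmost point of C - J" hits the intervals missed by T - J with no more points
  than some (C - J)-disjoint family S of them. The survivors T - J cut C into windows
  C_{i,j} free of survivors, and each interval of S lies in one window, where the
  hypothesis allows at most |T \<inter> C_{i,j}| = |T \<inter> J \<inter> C_{i,j}| of them. Summing,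
  |S| \<le> |T \<inter> J|, so (T - J) \<union> R has at most |T| points.
\<close>

lemma X_disjoint_iff:
  assumes "finite S"
  shows "X_disjoint X S \<longleftrightarrow> (\<forall>I\<in>S. \<forall>I'\<in>S. \<forall>x\<in>X. x \<in> I \<and> x \<in> I' \<longrightarrow> I = I')"
  unfolding X_disjoint_def using assms by (auto simp: card_le_Suc0_iff_eq)

lemma X_disjoint_antimono:
  "X_disjoint X S \<Longrightarrow> X' \<subseteq> X \<Longrightarrow> X_disjoint X' S"
  unfolding X_disjoint_def by blast

lemma X_disjoint_subset:
  assumes "X_disjoint X S" "S' \<subseteq> S" "finite S"
  shows "X_disjoint X S'"
  using assms unfolding X_disjoint_iff[OF \<open>finite S\<close>] X_disjoint_iff[OF finite_subset[OF assms(2,3)]]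
  by blast

lemma X_disjoint_insert:
  assumes "finite S" "I \<notin> S"
  shows "X_disjoint X (insert I S) \<longleftrightarrow> X_disjoint X S \<and> (\<forall>I'\<in>S. X \<inter> I \<inter> I' = {})"
  using assms unfolding X_disjoint_iff[OF \<open>finite S\<close>] X_disjoint_iff[OF finite.insertI[OF \<open>finite S\<close>]]
  by blast

lemma card_le_if_hits_X_disjoint:
  assumes "finite X" "hits X S" "X_disjoint X S"
  shows "card S \<le> card X"
proof (cases "finite S")
  case True
  define g where "g I = (SOME x. x \<in> X \<inter> I)" for I
  have g: "g I \<in> X \<inter> I" if "I \<in> S" for I
    unfolding g_def using assms(2) that unfolding hits_def by (metis Int_commute ex_in_conv someI_ex)
  have "inj_on g S"
    using g assms(3) unfolding X_disjoint_iff[OF True] by (metis IntE inj_onI)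
  then have "card S = card (g ` S)" by (simp add: card_image)
  also have "\<dots> \<le> card X" using g by (intro card_mono[OF assms(1)]) auto
  finally show ?thesis .
qed simp

lemma interval_greedy_point:
  fixes U :: "real set set"
  assumes "finite U" "U \<noteq> {}" "finite P"
    and intervals: "\<forall>I\<in>U. \<exists>a b. a \<le> b \<and> I = {a..b}"
    and meets: "\<forall>I\<in>U. P \<inter> I \<noteq> {}"
  shows "\<exists>I0\<in>U. \<exists>p\<in>P \<inter> I0. \<forall>I\<in>U. P \<inter> I0 \<inter> I \<noteq> {} \<longrightarrow> p \<in> I"
proof -
  have "Min (Sup ` U) \<in> Sup ` U" using assms(1,2) by (intro Min_in) auto
  then obtain I0 where I0: "I0 \<in> U" "Sup I0 = Min (Sup ` U)" by auto
  have I0_min: "Sup I0 \<le> Sup I" if "I \<in> U" for I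
    using I0(2) that assms(1) by simp
  obtain a0 b0 where ab0: "a0 \<le> b0" "I0 = {a0..b0}" using intervals I0(1) by blast
  define p where "p = Max (P \<inter> I0)"
  have PI0: "finite (P \<inter> I0)" "P \<inter> I0 \<noteq> {}" using assms(3) meets I0(1) by auto
  have p: "p \<in> P" "p \<in> I0" using Max_in[OF PI0] unfolding p_def by auto
  have "p \<in> I" if I: "I \<in> U" "P \<inter> I0 \<inter> I \<noteq> {}" for I
  proof -
    obtain x where x: "x \<in> P" "x \<in> I0" "x \<in> I" using I(2) by blast
    obtain a b where ab: "I = {a..b}" using intervals I(1) by blast
    have "x \<le> p" using Max_ge[OF PI0(1)] x(1,2) unfolding p_def by blast
    moreover have "p \<le> Sup I0" using p(2) ab0 by simp
    moreover have "Sup I0 \<le> b" using I0_min[OF I(1)] x(3) ab by simp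
    ultimately show "p \<in> I" using x(3) ab by simp
  qed
  then show ?thesis using I0(1) p by blast
qed

lemma interval_piercing_duality:
  fixes U :: "real set set"
  assumes "finite U" "finite P"
    and "\<forall>I\<in>U. \<exists>a b. a \<le> b \<and> I = {a..b}"
    and "\<forall>I\<in>U. P \<inter> I \<noteq> {}"
  obtains R S where "R \<subseteq> P" "S \<subseteq> U" "hits R U" "X_disjoint P S" "card R \<le> card S"
  using assms
proof (induction U arbitrary: thesis rule: finite_psubset_induct)
  case (psubset U)
  note result = psubset.prems(1) and finP = psubset.prems(2)
    and intervals = psubset.prems(3) and meets = psubset.prems(4)
  show ?case
  proof (cases "U = {}")
    case True
    then show ?thesis by (intro result[of "{}" "{}"]) (auto simp: hits_def X_disjoint_def)
  next
    case False
    obtain I0 p where I0: "I0 \<in> U" and p: "p \<in> P" "p \<in> I0"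
      and greedy: "\<And>I. I \<in> U \<Longrightarrow> P \<inter> I0 \<inter> I \<noteq> {} \<Longrightarrow> p \<in> I"
      using interval_greedy_point[OF psubset.hyps False finP intervals meets] by blast
    define U' where "U' = {I\<in>U. p \<notin> I}"
    have U': "U' \<subset> U" using I0 p unfolding U'_def by auto
    have "\<forall>I\<in>U'. \<exists>a b. a \<le> b \<and> I = {a..b}" "\<forall>I\<in>U'. P \<inter> I \<noteq> {}"
      using intervals meets unfolding U'_def by auto
    then obtain R' S' where R': "R' \<subseteq> P" "hits R' U'" "card R' \<le> card S'"
      and S': "S' \<subseteq> U'" "X_disjoint P S'"
      using psubset.IH[OF U' _ finP] by metis
    have "I0 \<notin> S'" using S'(1) p(2) unfolding U'_def by blast
    have "finite S'"
      using S'(1) U' by (intro finite_subset[OF _ psubset.hyps]) blast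
    have "P \<inter> I0 \<inter> I = {}" if "I \<in> S'" for I
    proof -
      have "I \<in> U" "p \<notin> I" using that S'(1) unfolding U'_def by auto
      then show ?thesis using greedy by blast
    qed
    then have disjoint: "X_disjoint P (insert I0 S')"
      using S'(2) by (simp add: X_disjoint_insert[OF \<open>finite S'\<close> \<open>I0 \<notin> S'\<close>])
    show ?thesis
    proof (rule result)
      show "insert p R' \<subseteq> P" using R'(1) p(1) by blast
      show "insert I0 S' \<subseteq> U" using S'(1) I0 unfolding U'_def by blast
      show "hits (insert p R') U" using R'(2) unfolding hits_def U'_def by blast
      show "X_disjoint P (insert I0 S')" by (rule disjoint)
      show "card (insert p R') \<le> card (insert I0 S')"
        using R'(3) \<open>I0 \<notin> S'\<close> \<open>finite S'\<close> finite_subset[OF R'(1) finP]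
        by (simp add: card_insert_if)
    qed
  qed
qed

lemma Cij_mono: "a \<le> a' \<Longrightarrow> b' \<le> b \<Longrightarrow> Cij c a' b' \<subseteq> Cij c a b"
  unfolding Cij_def by (intro image_mono) auto

lemma Iij_eq_empty:
  assumes "b < a" "\<forall>I\<in>Is. I \<inter> C \<noteq> {}"
  shows "Iij C c Is a b = {}"
  using assms unfolding Iij_def Cij_def by auto

lemma Iij_split:
  fixes c :: "nat \<Rightarrow> real"
  assumes "mono_on {a..b} c" "\<forall>I\<in>Is. \<exists>lo hi. lo \<le> hi \<and> I = {lo..hi}"
    and "I \<in> Iij C c Is a b" "k \<in> {a..b}" "c k \<notin> I"
  shows "I \<in> Iij C c Is a (k - 1) \<union> Iij C c Is (Suc k) b"
proof (rule ccontr)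
  assume "\<not> ?thesis"
  moreover have I: "I \<in> Is" "I \<inter> C \<subseteq> Cij c a b" using assms(3) unfolding Iij_def by auto
  ultimately have "\<not> (I \<inter> C \<subseteq> Cij c a (k - 1) \<or> I \<inter> C \<subseteq> Cij c (Suc k) b)"
    unfolding Iij_def by blast
  then obtain q r where q: "c q \<in> I" "q \<in> {a..b}" "q \<notin> {a..k - 1}"
    and r: "c r \<in> I" "r \<in> {a..b}" "r \<notin> {Suc k..b}"
    using I(2) unfolding Cij_def by blast
  have "q \<noteq> k" "r \<noteq> k" using q(1) r(1) assms(5) by auto
  then have "r < k" "k < q" using q(2,3) r(2,3) by auto
  then have "c r \<le> c k" "c k \<le> c q"
    using assms(1,4) q(2) r(2) by (auto intro: mono_onD)
  moreover obtain lo hi where "I = {lo..hi}" using assms(2) I(1) by blast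
  ultimately show False using q(1) r(1) assms(5) by auto
qed

lemma card_Int_Cij_split:
  assumes "inj_on c {a..b}" "k \<in> {a..b}" "finite A"
  shows "card (A \<inter> Cij c a (k - 1)) + card (A \<inter> Cij c (Suc k) b) \<le> card (A \<inter> Cij c a b)"
proof -
  have "Cij c a (k - 1) \<inter> Cij c (Suc k) b = c ` ({a..k - 1} \<inter> {Suc k..b})"
    unfolding Cij_def by (rule inj_on_image_Int[OF assms(1), symmetric]) (use assms(2) in auto)
  then have "Cij c a (k - 1) \<inter> Cij c (Suc k) b = {}" by auto
  then have "card (A \<inter> Cij c a (k - 1)) + card (A \<inter> Cij c (Suc k) b)
      = card (A \<inter> Cij c a (k - 1) \<union> A \<inter> Cij c (Suc k) b)"
    using assms(3) by (intro card_Un_disjoint[symmetric]) auto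
  also have "\<dots> \<le> card (A \<inter> Cij c a b)"
  proof (rule card_mono)
    show "finite (A \<inter> Cij c a b)" using assms(3) by simp
    have "Cij c a (k - 1) \<subseteq> Cij c a b" by (rule Cij_mono) (use assms(2) in auto)
    moreover have "Cij c (Suc k) b \<subseteq> Cij c a b" by (rule Cij_mono) (use assms(2) in auto)
    ultimately show "A \<inter> Cij c a (k - 1) \<union> A \<inter> Cij c (Suc k) b \<subseteq> A \<inter> Cij c a b" by blast
  qed
  finally show ?thesis .
qed

lemma delta_f_le_iff:
  assumes "finite Is"
  shows "delta_f C c Is i j f \<le> n \<longleftrightarrow>
    (\<forall>J S. J \<subseteq> Cij c i j \<longrightarrow> card J \<le> f \<longrightarrow> S \<subseteq> Iij C c Is i j \<longrightarrow>
       X_disjoint (Cij c i j - J) S \<longrightarrow> card S \<le> n)"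
proof -
  let ?admissible = "{J. J \<subseteq> Cij c i j \<and> card J \<le> f}"
  have deltas: "{delta_set C c Is i j J | J. J \<subseteq> Cij c i j \<and> card J \<le> f}
      = delta_set C c Is i j ` ?admissible" by blast
  have "finite ?admissible"
    using finite_Collect_subsets[of "Cij c i j"] by (rule rev_finite_subset) (auto simp: Cij_def)
  moreover have "{} \<in> ?admissible" by simp
  ultimately have "delta_f C c Is i j f \<le> n \<longleftrightarrow> (\<forall>J\<in>?admissible. delta_set C c Is i j J \<le> n)"
    unfolding delta_f_def deltas by (subst Max_le_iff) blast+
  moreover have "delta_set C c Is i j J \<le> n \<longleftrightarrow>
      (\<forall>S. S \<subseteq> Iij C c Is i j \<longrightarrow> X_disjoint (Cij c i j - J) S \<longrightarrow> card S \<le> n)" for J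
  proof -
    let ?families = "{S. S \<subseteq> Iij C c Is i j \<and> X_disjoint (Cij c i j - J) S}"
    have "finite (Iij C c Is i j)" using assms unfolding Iij_def by simp
    then have "finite ?families" by simp
    moreover have "{} \<in> ?families" by (simp add: X_disjoint_def)
    ultimately show ?thesis
      unfolding delta_set_def by (subst Max_le_iff) blast+
  qed
  ultimately show ?thesis by auto
qed

lemma card_le_delta_f:
  assumes "finite Is" "J \<subseteq> Cij c i j" "card J \<le> f"
    and "S \<subseteq> Iij C c Is i j" "X_disjoint (Cij c i j - J) S"
  shows "card S \<le> delta_f C c Is i j f"
  using assms delta_f_le_iff[OF assms(1), of C c i j f "delta_f C c Is i j f"] by blast

lemma tolerant_hitting_set_card_Int_ge:
  assumes tolerant: "tolerant_hitting_set f C Is T" and "finite C"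
    and "D \<subseteq> C" "J \<subseteq> D" "card J \<le> f"
    and "S \<subseteq> Is" "\<forall>I\<in>S. I \<inter> C \<subseteq> D" "X_disjoint (D - J) S"
  shows "card S \<le> card (T \<inter> D)"
proof -
  have "T \<subseteq> C" using tolerant unfolding tolerant_hitting_set_def by blast
  have "J \<subseteq> C" using assms(3,4) by (rule order.trans[rotated])
  then obtain R where R: "R \<subseteq> C - J" "card (T - J \<union> R) \<le> card T" "hits (T - J \<union> R) Is"
    using tolerant assms(5) unfolding tolerant_hitting_set_def by blast
  define X where "X = T - J \<union> R"
  have "X \<subseteq> C" using R(1) \<open>T \<subseteq> C\<close> unfolding X_def by blast
  have fin: "finite X" "finite T"
    using \<open>X \<subseteq> C\<close> \<open>T \<subseteq> C\<close> \<open>finite C\<close> by (simp_all add: finite_subset)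
  have "X \<inter> I \<noteq> {}" "X \<inter> I \<subseteq> D" if "I \<in> S" for I
  proof -
    show "X \<inter> I \<noteq> {}" using R(3) assms(6) that unfolding hits_def X_def by blast
    show "X \<inter> I \<subseteq> D" using \<open>X \<subseteq> C\<close> assms(7) that by blast
  qed
  then have "hits (X \<inter> D) S" unfolding hits_def by blast
  moreover have "X_disjoint (X \<inter> D) S"
    using assms(8) by (rule X_disjoint_antimono) (use R(1) in \<open>auto simp: X_def\<close>)
  ultimately have "card S \<le> card (X \<inter> D)"
    using fin by (intro card_le_if_hits_X_disjoint) auto
  also have "\<dots> \<le> card (T \<inter> D)"
  proof -
    \<comment> \<open>X agrees with T outside D, and is no larger than T.\<close>
    have "T - D \<subseteq> X - D" using assms(4) unfolding X_def by blast
    then have "card (T - D) \<le> card (X - D)" using fin by (intro card_mono) auto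
    moreover have "card (X \<inter> D) + card (X - D) \<le> card (T \<inter> D) + card (T - D)"
      using R(2) fin by (simp add: card_Int_Diff[symmetric] X_def)
    ultimately show ?thesis by linarith
  qed
  finally show ?thesis .
qed

lemma tolerant_hitting_setI:
  assumes "T \<subseteq> C" "finite C"
    and exchange: "\<And>J. J \<subseteq> C \<Longrightarrow> card J \<le> f \<Longrightarrow>
      \<exists>R \<subseteq> C - J. hits R {I\<in>Is. I \<inter> (T - J) = {}} \<and> card R \<le> card (T \<inter> J)"
  shows "tolerant_hitting_set f C Is T"
  unfolding tolerant_hitting_set_def
proof (intro conjI allI impI)
  fix J assume J: "J \<subseteq> C \<and> card J \<le> f"
  then obtain R where R: "R \<subseteq> C - J" "hits R {I\<in>Is. I \<inter> (T - J) = {}}" "card R \<le> card (T \<inter> J)"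
    using exchange by blast
  have "finite T" using assms(1,2) by (rule finite_subset)
  have "card (T - J \<union> R) \<le> card (T - J) + card (T \<inter> J)"
    using card_Un_le[of "T - J" R] R(3) by linarith
  also have "\<dots> = card T" using card_Int_Diff[OF \<open>finite T\<close>, of J] by simp
  finally have "card (T - J \<union> R) \<le> card T" .
  moreover have "hits (T - J \<union> R) Is" using R(2) unfolding hits_def by blast
  ultimately show "\<exists>R. R \<subseteq> C - J \<and> card (T - J \<union> R) \<le> card T \<and> hits (T - J \<union> R) Is"
    using R(1) by blast
qed (rule assms(1))

lemma X_disjoint_missed_card_le_deleted:
  fixes c :: "nat \<Rightarrow> real"
  assumes mono: "mono_on {1..m} c" and inj: "inj_on c {1..m}" and "finite Is"
    and intervals: "\<forall>I\<in>Is. \<exists>a b. a \<le> b \<and> I = {a..b}"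
    and big: "\<forall>I\<in>Is. card (I \<inter> c ` {1..m}) > f"
    and delta: "\<forall>i j. 1 \<le> i \<and> i \<le> j \<and> j \<le> m \<longrightarrow>
      delta_f (c ` {1..m}) c Is i j f \<le> card (T \<inter> Cij c i j)"
    and "finite J" "card J \<le> f"
  shows "\<lbrakk>1 \<le> a; b \<le> m; S \<subseteq> Iij (c ` {1..m}) c Is a b; \<forall>I\<in>S. I \<inter> (T - J) = {};
    X_disjoint (Cij c a b - J) S\<rbrakk> \<Longrightarrow> card S \<le> card (T \<inter> J \<inter> Cij c a b)"
proof (induction "Suc b - a" arbitrary: a b S rule: less_induct)
  case less
  let ?C = "c ` {1..m}"
  note window = less.prems(1,2) and family = less.prems(3)
    and missed = less.prems(4) and disjoint = less.prems(5)
  have "S \<subseteq> Is" using family unfolding Iij_def by blast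
  then have "finite S" using \<open>finite Is\<close> by (rule finite_subset)
  consider "b < a" | "a \<le> b" "\<forall>k\<in>{a..b}. c k \<notin> T - J" | k where "k \<in> {a..b}" "c k \<in> T - J"
    by (cases "b < a"; cases "\<exists>k\<in>{a..b}. c k \<in> T - J") auto
  then show ?case
  proof cases
    case 1
    have "\<forall>I\<in>Is. I \<inter> ?C \<noteq> {}" using big by (metis card.empty not_less0)
    then show ?thesis using family Iij_eq_empty[OF 1] by simp
  next
    case 2
    have "card (J \<inter> Cij c a b) \<le> f"
      using card_mono[OF \<open>finite J\<close>, of "J \<inter> Cij c a b"] \<open>card J \<le> f\<close> by auto
    moreover have "Cij c a b - J \<inter> Cij c a b = Cij c a b - J" by blast
    then have "X_disjoint (Cij c a b - J \<inter> Cij c a b) S" using disjoint by simp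
    ultimately have "card S \<le> delta_f ?C c Is a b f"
      by (intro card_le_delta_f[OF \<open>finite Is\<close> Int_lower2 _ family])
    also have "\<dots> \<le> card (T \<inter> Cij c a b)" using delta[rule_format, of a b] window 2(1) by simp
    also have "T \<inter> Cij c a b = T \<inter> J \<inter> Cij c a b" using 2(2) unfolding Cij_def by auto
    finally show ?thesis .
  next
    case 3
    have left: "Cij c a (k - 1) \<subseteq> Cij c a b" by (rule Cij_mono) (use 3(1) in auto)
    have right: "Cij c (Suc k) b \<subseteq> Cij c a b" by (rule Cij_mono) (use 3(1) in auto)
    have "mono_on {a..b} c" using mono by (rule mono_on_subset) (use window in auto)
    \<comment> \<open>No interval of S contains the survivor c k, so each lies on one side of it.\<close>
    define S1 where "S1 = S \<inter> Iij ?C c Is a (k - 1)"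
    have "S - S1 \<subseteq> Iij ?C c Is (Suc k) b"
    proof
      fix I assume I: "I \<in> S - S1"
      then have "c k \<notin> I" using missed 3(2) by blast
      then show "I \<in> Iij ?C c Is (Suc k) b"
        using Iij_split[OF \<open>mono_on {a..b} c\<close> intervals _ 3(1)] I family unfolding S1_def by blast
    qed
    then have "card (S - S1) \<le> card (T \<inter> J \<inter> Cij c (Suc k) b)"
      using 3(1) window missed right \<open>finite S\<close>
      by (intro less.hyps X_disjoint_subset[OF X_disjoint_antimono[OF disjoint]]) auto
    moreover have "card S1 \<le> card (T \<inter> J \<inter> Cij c a (k - 1))"
      using 3(1) window missed left \<open>finite S\<close>
      by (intro less.hyps X_disjoint_subset[OF X_disjoint_antimono[OF disjoint]]) (auto simp: S1_def)
    moreover have "card S = card S1 + card (S - S1)"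
      using card_Int_Diff[OF \<open>finite S\<close>, of "Iij ?C c Is a (k - 1)"] by (simp add: S1_def Diff_Int)
    moreover have "card (T \<inter> J \<inter> Cij c a (k - 1)) + card (T \<inter> J \<inter> Cij c (Suc k) b)
        \<le> card (T \<inter> J \<inter> Cij c a b)"
      using inj_on_subset[OF inj] window \<open>finite J\<close> by (intro card_Int_Cij_split[OF _ 3(1)]) auto
    ultimately show ?thesis by linarith
  qed
qed

lemma delta_f_le_card_if_tolerant_hitting_set:
  assumes tolerant: "tolerant_hitting_set f C Is T" and "Cij c i j \<subseteq> C"
    and "finite C" "finite Is"
  shows "delta_f C c Is i j f \<le> card (T \<inter> Cij c i j)"
proof (unfold delta_f_le_iff[OF \<open>finite Is\<close>], intro allI impI)
  fix J S
  assume "J \<subseteq> Cij c i j" "card J \<le> f" "S \<subseteq> Iij C c Is i j" "X_disjoint (Cij c i j - J) S"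
  then show "card S \<le> card (T \<inter> Cij c i j)"
    using \<open>Cij c i j \<subseteq> C\<close>
    by (intro tolerant_hitting_set_card_Int_ge[OF tolerant \<open>finite C\<close>]) (auto simp: Iij_def)
qed

lemma tolerant_hitting_set_if_delta_f_le_card:
  fixes c :: "nat \<Rightarrow> real"
  assumes mono: "mono_on {1..m} c" and inj: "inj_on c {1..m}" and fin: "finite Is"
    and intervals: "\<forall>I\<in>Is. \<exists>a b. a \<le> b \<and> I = {a..b}"
    and big: "\<forall>I\<in>Is. card (I \<inter> c ` {1..m}) > f"
    and "T \<subseteq> c ` {1..m}"
    and delta: "\<forall>i j. 1 \<le> i \<and> i \<le> j \<and> j \<le> m \<longrightarrow>
      delta_f (c ` {1..m}) c Is i j f \<le> card (T \<inter> Cij c i j)"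
  shows "tolerant_hitting_set f (c ` {1..m}) Is T"
proof (rule tolerant_hitting_setI[OF \<open>T \<subseteq> c ` {1..m}\<close>])
  let ?C = "c ` {1..m}"
  fix J assume J: "J \<subseteq> ?C" "card J \<le> f"
  have "finite J" using J(1) by (rule finite_subset) simp
  define U where "U = {I\<in>Is. I \<inter> (T - J) = {}}"
  have meets: "\<forall>I\<in>U. (?C - J) \<inter> I \<noteq> {}"
  proof (intro ballI notI)
    fix I assume "I \<in> U" "(?C - J) \<inter> I = {}"
    then have "card (I \<inter> ?C) \<le> card J" using \<open>finite J\<close> by (intro card_mono) auto
    then show False using big J(2) \<open>I \<in> U\<close> unfolding U_def by fastforce
  qed
  obtain R S where R: "R \<subseteq> ?C - J" "S \<subseteq> U" "hits R U" "X_disjoint (?C - J) S" "card R \<le> card S"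
    by (rule interval_piercing_duality[OF _ _ _ meets]) (use fin intervals in \<open>auto simp: U_def\<close>)
  have "Cij c 1 m = ?C" unfolding Cij_def ..
  note windows = X_disjoint_missed_card_le_deleted[OF mono inj fin intervals big delta \<open>finite J\<close> J(2)]
  have "card S \<le> card (T \<inter> J \<inter> Cij c 1 m)"
    using R(2,4) \<open>Cij c 1 m = ?C\<close> by (intro windows) (auto simp: U_def Iij_def)
  also have "\<dots> \<le> card (T \<inter> J)" using \<open>finite J\<close> by (intro card_mono) auto
  finally show "\<exists>R\<subseteq>?C - J. hits R U \<and> card R \<le> card (T \<inter> J)"
    using R(1,3,5) by (intro exI[of _ R]) auto
qed simp

theorem lemma3:
  fixes c :: "nat \<Rightarrow> real" and m f :: nat and Is :: "real set set" and T :: "real set"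
  assumes sorted: "\<forall>i j. 1 \<le> i \<and> i \<le> j \<and> j \<le> m \<longrightarrow> c i \<le> c j"
    and distinct: "inj_on c {1..m}"
    and fin: "finite Is"
    and closed_intervals: "\<forall>I\<in>Is. \<exists>a b. a \<le> b \<and> I = {a..b}"
    and big: "\<forall>I\<in>Is. card (I \<inter> c ` {1..m}) > f"
    and TC: "T \<subseteq> c ` {1..m}"
  shows "tolerant_hitting_set f (c ` {1..m}) Is T \<longleftrightarrow>
         (\<forall>i j. 1 \<le> i \<and> i \<le> j \<and> j \<le> m \<longrightarrow>
            card (T \<inter> Cij c i j) \<ge> delta_f (c ` {1..m}) c Is i j f)"
proof
  assume tolerant: "tolerant_hitting_set f (c ` {1..m}) Is T"
  show "\<forall>i j. 1 \<le> i \<and> i \<le> j \<and> j \<le> m \<longrightarrow>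
      delta_f (c ` {1..m}) c Is i j f \<le> card (T \<inter> Cij c i j)"
  proof (intro allI impI)
    fix i j assume "1 \<le> i \<and> i \<le> j \<and> j \<le> m"
    then have "Cij c i j \<subseteq> Cij c 1 m" by (intro Cij_mono) auto
    also have "\<dots> = c ` {1..m}" unfolding Cij_def ..
    finally show "delta_f (c ` {1..m}) c Is i j f \<le> card (T \<inter> Cij c i j)"
      by (rule delta_f_le_card_if_tolerant_hitting_set[OF tolerant]) (simp_all add: fin)
  qed
next
  have "mono_on {1..m} c" using sorted by (intro mono_onI) auto
  then show "\<forall>i j. 1 \<le> i \<and> i \<le> j \<and> j \<le> m \<longrightarrow>
      delta_f (c ` {1..m}) c Is i j f \<le> card (T \<inter> Cij c i j) \<Longrightarrow>
      tolerant_hitting_set f (c ` {1..m}) Is T"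
    by (rule tolerant_hitting_set_if_delta_f_le_card[OF _ distinct fin closed_intervals big TC])
qed

end
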